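(* If the genus function $g$ satisfies $g(n)\gg n/\log n$, then $\left(|\mathrm{Hered}(\mathcal F^g)_n|/n!\right)^{1/n}\to\infty$ as $n\to\infty$.
   Context: All graphs are finite and simple; $\mathcal B_n$ is the set of graphs in a class $\mathcal B$ on vertex set $[n]$. A genus function is $g:\mathbb N\to\mathbb N_0$. $\mathcal F^g$ is the class of graphs $G$ such that, if $G$ has $n$ vertices, every cellular embedding of $G$ has Euler genus at most $g(n)$; equivalently the cycle rank $e(G)-v(G)+\kappa(G)$ is at most $g(n)$ ($\kappa(G)$ = number of components). $\mathrm{Hered}(\mathcal B)$ is the class of graphs $G$ with $G[W]\in\mathcal B$ for every nonempty $W\subseteq V(G)$ (so for $G[W]$ the relevant bound is $g(|W|)$). $x\ll y$ means $x/y\to0$. *)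

theory Defs
  imports Complex_Main "HOL-Library.Landau_Symbols"
begin

text \<open>A finite simple graph on vertex set V is represented by its edge set E,
  a set of 2-element subsets of V.\<close>

definition edges_on :: "nat set \<Rightarrow> nat set set" where
  "edges_on V = {e. e \<subseteq> V \<and> card e = 2}"

definition graphs_on :: "nat set \<Rightarrow> nat set set set" where
  "graphs_on V = Pow (edges_on V)"

definition conn_rel :: "nat set \<Rightarrow> nat set set \<Rightarrow> (nat \<times> nat) set" where
  "conn_rel V E = ({(u, v). {u, v} \<in> E}\<^sup>* ) \<inter> (V \<times> V)"

definition num_components :: "nat set \<Rightarrow> nat set set \<Rightarrow> nat" where
  "num_components V E = card (V // conn_rel V E)"

definition cycle_rank :: "nat set \<Rightarrow> nat set set \<Rightarrow> int" where
  "cycle_rank V E = int (card E) - int (card V) + int (num_components V E)"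

definition induced_edges :: "nat set set \<Rightarrow> nat set \<Rightarrow> nat set set" where
  "induced_edges E W = {e \<in> E. e \<subseteq> W}"

text \<open>The n-vertex members of Hered(F^g): graphs on [n] every nonempty induced
  subgraph G[W] of which has cycle rank at most g(|W|).\<close>
definition hered_Fg :: "(nat \<Rightarrow> nat) \<Rightarrow> nat \<Rightarrow> nat set set set" where
  "hered_Fg g n = {E \<in> graphs_on {1..n}.
     \<forall>W. W \<subseteq> {1..n} \<and> W \<noteq> {} \<longrightarrow> cycle_rank W (induced_edges E W) \<le> int (g (card W))}"

end

theory Submission
  imports Defs "HOL-Combinatorics.Permutations" "HOL-Library.FuncSet" "HOL-Real_Asymp.Real_Asymp"
begin

text \<open>Hang m paths of l vertices each on a base of nb vertices, path i being attached to the
  base vertices a i and b i. Deleting vertices of degree at most 1, and otherwise a vertex of a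
  path lying completely inside W, shows that the subgraph induced on W has cycle rank at most
  the number of paths inside W, hence at most |W| / l; for l about ln n / M this is below g |W|.
  The graph together with the first vertex of every path determines the order of the path
  vertices and the attachment points, so Hered(F^g) has at least (ml)! nb^(2m) / (ml)^m graphs
  on [n]. With nb about n / (ln n)^2 this exceeds exp ((M - 1) n) n! for large n, and M is
  arbitrary.\<close>

section \<open>Cycle rank under deletion of a vertex\<close>

lemma card_quotient_le_card_quotient_add:
  assumes "equiv A R" "equiv A' R'" "R' \<subseteq> R" "finite A'" "finite S"
    and "\<And>x. x \<in> A \<Longrightarrow> \<exists>y \<in> A' \<union> S. (x, y) \<in> R"
  shows "card (A // R) \<le> card (A' // R') + card S"
proof -
  have "A // R \<subseteq> (\<lambda>C. R `` C) ` (A' // R') \<union> (\<lambda>s. R `` {s}) ` S"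
  proof
    fix X assume "X \<in> A // R"
    then obtain x where x: "x \<in> A" "X = R `` {x}" by (auto elim: quotientE)
    then obtain y where y: "y \<in> A' \<union> S" "(x, y) \<in> R" using assms(6) by blast
    have X: "X = R `` {y}" using x y assms(1) by (simp add: equiv_class_eq)
    show "X \<in> (\<lambda>C. R `` C) ` (A' // R') \<union> (\<lambda>s. R `` {s}) ` S"
    proof (cases "y \<in> A'")
      case True
      have "(y, y) \<in> R'" using True assms(2) by (simp add: equiv_def refl_on_def)
      then have "R `` (R' `` {y}) = R `` {y}"
        using assms(1,3) unfolding equiv_def trans_def by blast
      then show ?thesis using True X by (auto intro: quotientI)
    next
      case False
      then show ?thesis using X y by auto
    qed
  qed
  moreover have "finite (A' // R')" by (rule finite_quotient[OF assms(4) equiv_type[OF assms(2)]])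
  ultimately have "card (A // R) \<le> card ((\<lambda>C. R `` C) ` (A' // R') \<union> (\<lambda>s. R `` {s}) ` S)"
    using assms(5) by (intro card_mono) auto
  also have "\<dots> \<le> card ((\<lambda>C. R `` C) ` (A' // R')) + card ((\<lambda>s. R `` {s}) ` S)"
    by (rule card_Un_le)
  also have "\<dots> \<le> card (A' // R') + card S"
    by (intro add_mono card_image_le) (use assms(5) \<open>finite (A' // R')\<close> in auto)
  finally show ?thesis .
qed

lemma conn_rel_equiv: "equiv V (conn_rel V E)"
proof (rule equivI)
  let ?A = "{(u, v). {u, v} \<in> E}"
  have "sym ?A" by (auto simp: sym_def insert_commute)
  then show "sym (conn_rel V E)"
    unfolding conn_rel_def by (intro sym_Int sym_rtrancl) (auto simp: sym_def)
  show "trans (conn_rel V E)"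
    unfolding conn_rel_def by (intro trans_Int trans_rtrancl) (auto simp: trans_def)
qed (auto simp: refl_on_def conn_rel_def)

lemma conn_rel_mono: "V' \<subseteq> V \<Longrightarrow> E' \<subseteq> E \<Longrightarrow> conn_rel V' E' \<subseteq> conn_rel V E"
proof -
  assume "V' \<subseteq> V" "E' \<subseteq> E"
  then have "{(u, v). {u, v} \<in> E'}\<^sup>* \<subseteq> {(u, v). {u, v} \<in> E}\<^sup>*"
    by (intro rtrancl_mono) auto
  with \<open>V' \<subseteq> V\<close> show ?thesis unfolding conn_rel_def by auto
qed

definition incident :: "nat set set \<Rightarrow> nat \<Rightarrow> nat set set" where
  "incident E x = {e \<in> E. x \<in> e}"

lemma finite_induced_edges: "finite W \<Longrightarrow> finite (induced_edges E W)"
  by (rule finite_subset[of _ "Pow W"]) (auto simp: induced_edges_def)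

lemma num_components_le_remove_vertex:
  assumes "finite W" "x \<in> W" "\<forall>e\<in>E. card e = 2"
  shows "num_components W (induced_edges E W)
    \<le> num_components (W - {x}) (induced_edges E (W - {x}))
      + (if incident (induced_edges E W) x = {} then 1 else 0)"
proof -
  define S where "S = (if incident (induced_edges E W) x = {} then {x} else {})"
  have linked: "\<exists>y \<in> (W - {x}) \<union> S. (z, y) \<in> conn_rel W (induced_edges E W)" if "z \<in> W" for z
  proof (cases "z = x \<and> S = {}")
    case True
    then obtain e where e: "e \<in> E" "e \<subseteq> W" "x \<in> e"
      by (auto simp: S_def incident_def induced_edges_def split: if_splits)
    then have "card (e - {x}) = 1" using assms(3) by simp
    then obtain y where "e - {x} = {y}" by (auto simp: card_1_singleton_iff)
    then have "e = {x, y}" "y \<noteq> x" using \<open>x \<in> e\<close> by auto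
    then show ?thesis using True e by (auto simp: conn_rel_def induced_edges_def)
  next
    case False
    then have "z \<in> (W - {x}) \<union> S" using that by (auto simp: S_def split: if_splits)
    moreover have "(z, z) \<in> conn_rel W (induced_edges E W)"
      using that by (simp add: conn_rel_def)
    ultimately show ?thesis by blast
  qed
  have "card (W // conn_rel W (induced_edges E W))
      \<le> card ((W - {x}) // conn_rel (W - {x}) (induced_edges E (W - {x}))) + card S"
  proof (rule card_quotient_le_card_quotient_add[OF conn_rel_equiv conn_rel_equiv])
    show "conn_rel (W - {x}) (induced_edges E (W - {x})) \<subseteq> conn_rel W (induced_edges E W)"
      by (rule conn_rel_mono) (auto simp: induced_edges_def)
  qed (use assms(1) linked in \<open>simp_all add: S_def\<close>)
  then show ?thesis
    unfolding num_components_def S_def by (cases "incident (induced_edges E W) x = {}") simp_all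
qed

lemma cycle_rank_le_remove_vertex:
  assumes "finite W" "x \<in> W" "\<forall>e\<in>E. card e = 2"
  shows "cycle_rank W (induced_edges E W)
    \<le> cycle_rank (W - {x}) (induced_edges E (W - {x}))
      + max 0 (int (card (incident (induced_edges E W) x)) - 1)"
proof -
  define D where "D = incident (induced_edges E W) x"
  have "finite D" using finite_induced_edges[OF assms(1)] by (simp add: D_def incident_def)
  have "induced_edges E W = induced_edges E (W - {x}) \<union> D"
    "induced_edges E (W - {x}) \<inter> D = {}"
    by (auto simp: induced_edges_def D_def incident_def)
  then have edges: "card (induced_edges E W) = card (induced_edges E (W - {x})) + card D"
    using \<open>finite D\<close> finite_induced_edges[of "W - {x}"] assms(1) by (simp add: card_Un_disjoint)
  have vertices: "card W = card (W - {x}) + 1" using card.remove[OF assms(1,2)] by simp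
  have "(incident (induced_edges E W) x = {}) = (card D = 0)" using \<open>finite D\<close> by (simp add: D_def)
  then have components: "num_components W (induced_edges E W)
      \<le> num_components (W - {x}) (induced_edges E (W - {x})) + (if card D = 0 then 1 else 0)"
    using num_components_le_remove_vertex[OF assms] by simp
  show ?thesis
    using edges vertices components unfolding cycle_rank_def D_def[symmetric]
    by (cases "card D = 0") simp_all
qed

section \<open>Graphs made of hanging paths\<close>

lemma grid_index_less:
  fixes i j m l :: nat
  assumes "i < m" "j < l"
  shows "i * l + j < m * l"
proof -
  have "i * l + j < Suc i * l" using assms(2) by simp
  also have "\<dots> \<le> m * l" using assms(1) by (intro mult_right_mono) auto
  finally show ?thesis .
qed

lemma grid_index_bij:
  fixes m l :: nat
  shows "bij_betw (\<lambda>(i, j). i * l + j) ({..<m} \<times> {..<l}) {..<m * l}"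
proof (rule bij_betw_imageI)
  show "inj_on (\<lambda>(i, j). i * l + j) ({..<m} \<times> {..<l})"
  proof (rule inj_onI, clarsimp)
    fix i j i' j' :: nat
    assume "j < l" "j' < l" "i * l + j = i' * l + j'"
    then have "(i * l + j) div l = (i' * l + j') div l" "(i * l + j) mod l = (i' * l + j') mod l"
      by simp_all
    then show "i = i' \<and> j = j'" using \<open>j < l\<close> \<open>j' < l\<close> by simp
  qed
  show "(\<lambda>(i, j). i * l + j) ` ({..<m} \<times> {..<l}) = {..<m * l}"
  proof safe
    fix i j assume "i < m" "j < l"
    then show "i * l + j < m * l" by (rule grid_index_less)
  next
    fix k assume "k < m * l"
    moreover have "0 < l" using \<open>k < m * l\<close> by (cases l) auto
    ultimately have "k div l < m" "k mod l < l" "k = k div l * l + k mod l"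
      by (auto simp: less_mult_imp_div_less)
    then show "k \<in> (\<lambda>(i, j). i * l + j) ` ({..<m} \<times> {..<l})" by force
  qed
qed

lemma all_less_if_Suc_iff:
  fixes P :: "nat \<Rightarrow> bool"
  assumes "P j" "j < l" and step: "\<And>k. Suc k < l \<Longrightarrow> P k \<longleftrightarrow> P (Suc k)"
  shows "k < l \<Longrightarrow> P k"
proof -
  have "k < l \<Longrightarrow> P k \<longleftrightarrow> P 0" for k
    by (induction k) (use step in auto)
  then show "k < l \<Longrightarrow> P k" using assms(1,2) by blast
qed

lemma card_doubleton_le: "card {x, y} \<le> 2"
  by (cases "x = y") simp_all

text \<open>The base is {1..nb}; the permutation p of {..<m * l} distributes the remaining vertices
  over the m paths.\<close>

definition path_vertex :: "nat \<Rightarrow> nat \<Rightarrow> (nat \<Rightarrow> nat) \<Rightarrow> nat \<Rightarrow> nat \<Rightarrow> nat" where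
  "path_vertex nb l p i j = nb + 1 + p (i * l + j)"

definition hanging_paths ::
    "nat \<Rightarrow> nat \<Rightarrow> nat \<Rightarrow> (nat \<Rightarrow> nat) \<Rightarrow> (nat \<Rightarrow> nat) \<Rightarrow> (nat \<Rightarrow> nat) \<Rightarrow> nat set set" where
  "hanging_paths nb l m p a b =
     {{path_vertex nb l p i j, path_vertex nb l p i (Suc j)} | i j. i < m \<and> Suc j < l}
     \<union> {{a i, path_vertex nb l p i 0} | i. i < m}
     \<union> {{path_vertex nb l p i (l - 1), b i} | i. i < m}"

locale hanging_path_code =
  fixes nb l m :: nat and p a b :: "nat \<Rightarrow> nat"
  assumes length_ge_2: "2 \<le> l"
    and permutes: "p permutes {..<m * l}"
    and a_in_base: "i < m \<Longrightarrow> a i \<in> {1..nb}"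
    and b_in_base: "i < m \<Longrightarrow> b i \<in> {1..nb}"
begin

abbreviation v where "v \<equiv> path_vertex nb l p"
abbreviation G where "G \<equiv> hanging_paths nb l m p a b"

definition prev_vertex where "prev_vertex i j = (if j = 0 then a i else v i (j - 1))"
definition next_vertex where "next_vertex i j = (if j = l - 1 then b i else v i (Suc j))"

lemma path_vertex_not_in_base: "v i j \<notin> {1..nb}"
  by (simp add: path_vertex_def)

lemma path_vertex_le:
  assumes "i < m" "j < l" shows "v i j \<le> nb + m * l"
proof -
  have "p (i * l + j) < m * l"
    using permutes_in_image[OF permutes] grid_index_less[OF assms] by simp
  then show ?thesis by (simp add: path_vertex_def)
qed

lemma path_vertex_eq_iff:
  assumes "i < m" "j < l" "i' < m" "j' < l"
  shows "v i j = v i' j' \<longleftrightarrow> i = i' \<and> j = j'"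
proof -
  have "v i j = v i' j' \<longleftrightarrow> i * l + j = i' * l + j'"
    using permutes_inj[OF permutes] by (simp add: path_vertex_def inj_eq)
  also have "\<dots> \<longleftrightarrow> (i, j) = (i', j')"
    using inj_on_eq_iff[OF bij_betw_imp_inj_on[OF grid_index_bij[where m = m and l = l]]] assms
    by auto
  finally show ?thesis by simp
qed

lemma hanging_paths_cases:
  assumes "e \<in> G"
  obtains (inner) i j where "i < m" "Suc j < l" "e = {v i j, v i (Suc j)}"
    | (first) i where "i < m" "e = {a i, v i 0}"
    | (last) i where "i < m" "e = {v i (l - 1), b i}"
proof -
  from assms consider
      (inner) "\<exists>i j. i < m \<and> Suc j < l \<and> e = {v i j, v i (Suc j)}"
    | (first) "\<exists>i. i < m \<and> e = {a i, v i 0}"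
    | (last) "\<exists>i. i < m \<and> e = {v i (l - 1), b i}"
    unfolding hanging_paths_def by blast
  then show thesis using that by cases blast+
qed

lemma card_hanging_paths_edge:
  assumes "e \<in> G" shows "card e = 2"
  using assms
proof (cases rule: hanging_paths_cases)
  case (inner i j) then show ?thesis using path_vertex_eq_iff[of i j i "Suc j"] by auto
next
  case (first i) then show ?thesis using path_vertex_not_in_base[of i 0] a_in_base[of i] by auto
next
  case (last i) then show ?thesis
    using path_vertex_not_in_base[of i "l - 1"] b_in_base[of i] by auto
qed

lemma hanging_paths_subset: "G \<subseteq> edges_on {1..nb + m * l}"
proof
  fix e assume e: "e \<in> G"
  from e have "e \<subseteq> {1..nb + m * l}"
  proof (cases rule: hanging_paths_cases)
    case (inner i j) then show ?thesis using path_vertex_le[of i j] path_vertex_le[of i "Suc j"]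
      by (auto simp: path_vertex_def)
  next
    case (first i) then show ?thesis using a_in_base[of i] path_vertex_le[of i 0] length_ge_2
      by (auto simp: path_vertex_def)
  next
    case (last i) then show ?thesis using b_in_base[of i] path_vertex_le[of i "l - 1"] length_ge_2
      by (auto simp: path_vertex_def)
  qed
  then show "e \<in> edges_on {1..nb + m * l}"
    using card_hanging_paths_edge[OF e] by (simp add: edges_on_def)
qed

lemma edge_meets_path:
  assumes "e \<in> G" shows "\<exists>i<m. \<exists>j<l. v i j \<in> e"
  using assms
proof (cases rule: hanging_paths_cases)
  case (inner i j) then show ?thesis by auto
next
  case (first i)
  moreover have "0 < l" using length_ge_2 by simp
  ultimately show ?thesis by blast
next
  case (last i)
  moreover have "l - 1 < l" using length_ge_2 by simp
  ultimately show ?thesis by blast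
qed

lemma inner_edge: "i < m \<Longrightarrow> Suc j < l \<Longrightarrow> {v i j, v i (Suc j)} \<in> G"
  unfolding hanging_paths_def by blast

lemma first_edge: "i < m \<Longrightarrow> {a i, v i 0} \<in> G"
  unfolding hanging_paths_def by blast

lemma last_edge: "i < m \<Longrightarrow> {v i (l - 1), b i} \<in> G"
  unfolding hanging_paths_def by blast

lemma edge_at_path_vertex:
  assumes "i < m" "j < l" "e \<in> G" "v i j \<in> e"
  shows "e = {v i j, prev_vertex i j} \<or> e = {v i j, next_vertex i j}"
  using assms(3)
proof (cases rule: hanging_paths_cases)
  case (inner i' j')
  then have "i = i' \<and> j = j' \<or> i = i' \<and> j = Suc j'"
    using assms path_vertex_eq_iff[of i j i' j'] path_vertex_eq_iff[of i j i' "Suc j'"] by auto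
  then show ?thesis
  proof
    assume "i = i' \<and> j = j'"
    then have "j \<noteq> l - 1" "e = {v i j, v i (Suc j)}" using inner by auto
    then have "e = {v i j, next_vertex i j}" by (simp add: next_vertex_def)
    then show ?thesis ..
  next
    assume "i = i' \<and> j = Suc j'"
    then have "e = {v i j, prev_vertex i j}"
      using inner by (simp add: prev_vertex_def insert_commute)
    then show ?thesis ..
  qed
next
  case (first i')
  have "a i' \<noteq> v i j" using a_in_base[OF first(1)] path_vertex_not_in_base[of i j] by metis
  then have "v i j = v i' 0" using first assms(4) by auto
  then have "i = i' \<and> j = 0"
    using assms(1,2) first(1) length_ge_2 path_vertex_eq_iff[of i j i' 0] by simp
  then have "e = {v i j, prev_vertex i j}" using first by (simp add: prev_vertex_def insert_commute)
  then show ?thesis ..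
next
  case (last i')
  have "b i' \<noteq> v i j" using b_in_base[OF last(1)] path_vertex_not_in_base[of i j] by metis
  then have "v i j = v i' (l - 1)" using last assms(4) by auto
  then have "i = i' \<and> j = l - 1"
    using assms(1,2) last(1) length_ge_2 path_vertex_eq_iff[of i j i' "l - 1"] by simp
  then have "e = {v i j, next_vertex i j}" using last by (simp add: next_vertex_def)
  then show ?thesis ..
qed

lemma neighbour_of_path_vertex:
  assumes "i < m" "j < l" "{v i j, y} \<in> G"
  shows "y = prev_vertex i j \<or> y = next_vertex i j"
  using edge_at_path_vertex[OF assms] by (auto simp: doubleton_eq_iff)

definition paths_within where "paths_within W = {i. i < m \<and> (\<forall>j<l. v i j \<in> W)}"

lemma paths_within_mono: "W' \<subseteq> W \<Longrightarrow> paths_within W' \<subseteq> paths_within W"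
  by (auto simp: paths_within_def)

lemma finite_paths_within: "finite (paths_within W)"
  by (rule finite_subset[of _ "{..<m}"]) (auto simp: paths_within_def)

lemma card_paths_within_le:
  assumes "finite W" shows "card (paths_within W) * l \<le> card W"
proof -
  define path where "path i = v i ` {..<l}" for i
  have card_path: "card (path i) = l" if "i < m" for i
  proof -
    have "inj_on (v i) {..<l}" using path_vertex_eq_iff[of i _ i] that by (auto simp: inj_on_def)
    then show ?thesis by (simp add: path_def card_image)
  qed
  have "card (\<Union>i\<in>paths_within W. path i) = (\<Sum>i\<in>paths_within W. card (path i))"
    using path_vertex_eq_iff
    by (intro card_UN_disjoint finite_paths_within) (auto simp: path_def paths_within_def)
  also have "\<dots> = card (paths_within W) * l" using card_path by (simp add: paths_within_def)
  finally have "card (\<Union>i\<in>paths_within W. path i) = card (paths_within W) * l" .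
  moreover have "card (\<Union>i\<in>paths_within W. path i) \<le> card W"
    by (rule card_mono[OF assms]) (auto simp: path_def paths_within_def)
  ultimately show ?thesis by simp
qed

lemma incident_path_vertex_subset:
  assumes "i < m" "j < l"
  shows "incident (induced_edges G W) (v i j) \<subseteq> {{v i j, prev_vertex i j}, {v i j, next_vertex i j}}"
  using edge_at_path_vertex[OF assms] by (auto simp: incident_def induced_edges_def)

lemma card_incident_path_vertex_le:
  assumes "i < m" "j < l" shows "card (incident (induced_edges G W) (v i j)) \<le> 2"
  using card_mono[OF _ incident_path_vertex_subset[OF assms, of W]]
    card_doubleton_le[of "{v i j, prev_vertex i j}" "{v i j, next_vertex i j}"]
  by simp

lemma neighbours_in_if_degree_ge_2:
  assumes "i < m" "j < l" "2 \<le> card (incident (induced_edges G W) (v i j))"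
  shows "prev_vertex i j \<in> W" "next_vertex i j \<in> W"
proof -
  let ?D = "incident (induced_edges G W) (v i j)"
  let ?P = "{{v i j, prev_vertex i j}, {v i j, next_vertex i j}}"
  have "card ?P \<le> card ?D"
    using assms(3) card_doubleton_le[of "{v i j, prev_vertex i j}" "{v i j, next_vertex i j}"]
    by linarith
  then have "?D = ?P"
    using incident_path_vertex_subset[OF assms(1,2)] by (intro card_seteq) simp_all
  then have "{v i j, prev_vertex i j} \<in> ?D" "{v i j, next_vertex i j} \<in> ?D" by simp_all
  then show "prev_vertex i j \<in> W" "next_vertex i j \<in> W"
    by (simp_all add: incident_def induced_edges_def)
qed

lemma path_within_if_min_degree:
  assumes min_degree: "\<forall>x\<in>W. 2 \<le> card (incident (induced_edges G W) x)"
    and "i < m" "j < l" "v i j \<in> W"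
  shows "i \<in> paths_within W"
proof -
  have "v i k \<in> W" if "k < l" for k
  proof (rule all_less_if_Suc_iff[of "\<lambda>k. v i k \<in> W", OF assms(4,3) _ that])
    fix k assume k: "Suc k < l"
    show "v i k \<in> W \<longleftrightarrow> v i (Suc k) \<in> W"
    proof
      assume "v i k \<in> W"
      then have "next_vertex i k \<in> W"
        using neighbours_in_if_degree_ge_2(2)[OF \<open>i < m\<close>, of k W] min_degree k by simp
      moreover have "k \<noteq> l - 1" using k by simp
      ultimately show "v i (Suc k) \<in> W" by (simp add: next_vertex_def)
    next
      assume "v i (Suc k) \<in> W"
      then have "prev_vertex i (Suc k) \<in> W"
        using neighbours_in_if_degree_ge_2(1)[OF \<open>i < m\<close> k, of W] min_degree by simp
      then show "v i k \<in> W" by (simp add: prev_vertex_def)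
    qed
  qed
  then show ?thesis using assms(2) by (simp add: paths_within_def)
qed

lemma obtain_path_within_if_min_degree:
  assumes "W \<noteq> {}" and min_degree: "\<forall>x\<in>W. 2 \<le> card (incident (induced_edges G W) x)"
  obtains i j where "i < m" "j < l" "v i j \<in> W" "i \<in> paths_within W"
proof -
  obtain x where "x \<in> W" using assms(1) by blast
  then have "card (incident (induced_edges G W) x) \<noteq> 0" using min_degree by fastforce
  then obtain e where "e \<in> incident (induced_edges G W) x" by (metis card.empty ex_in_conv)
  then have "e \<in> G" "e \<subseteq> W" by (auto simp: incident_def induced_edges_def)
  then obtain i j where "i < m" "j < l" "v i j \<in> W" using edge_meets_path by blast
  then show thesis using that path_within_if_min_degree[OF min_degree] by blast
qed

lemma cycle_rank_le_paths_within:
  "finite W \<Longrightarrow> cycle_rank W (induced_edges G W) \<le> int (card (paths_within W))"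
proof (induction "card W" arbitrary: W rule: less_induct)
  case less
  let ?deg = "\<lambda>x. card (incident (induced_edges G W) x)"
  have remove: "cycle_rank W (induced_edges G W)
      \<le> int (card (paths_within (W - {x}))) + max 0 (int (?deg x) - 1)" if "x \<in> W" for x
  proof -
    have "cycle_rank W (induced_edges G W)
        \<le> cycle_rank (W - {x}) (induced_edges G (W - {x})) + max 0 (int (?deg x) - 1)"
      by (rule cycle_rank_le_remove_vertex[OF less.prems that])
        (use card_hanging_paths_edge in blast)
    also have "cycle_rank (W - {x}) (induced_edges G (W - {x}))
        \<le> int (card (paths_within (W - {x})))"
      by (rule less.hyps[OF card_Diff1_less[OF less.prems that]]) (use less.prems in simp)
    finally show ?thesis by simp
  qed
  have "W = {} \<or> (\<exists>x\<in>W. ?deg x < 2) \<or> (W \<noteq> {} \<and> (\<forall>x\<in>W. 2 \<le> ?deg x))"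
    by (auto simp: not_less)
  then consider (empty) "W = {}" | (leaf) x where "x \<in> W" "?deg x < 2"
    | (min_degree) "W \<noteq> {}" "\<forall>x\<in>W. 2 \<le> ?deg x"
    by blast
  then show ?case
  proof cases
    case empty
    then have "induced_edges G W = {}"
      by (auto simp: induced_edges_def dest: card_hanging_paths_edge)
    then show ?thesis using empty by (simp add: cycle_rank_def num_components_def)
  next
    case (leaf x)
    have "card (paths_within (W - {x})) \<le> card (paths_within W)"
      by (intro card_mono finite_paths_within paths_within_mono) auto
    then show ?thesis using remove[OF leaf(1)] leaf(2) by simp
  next
    case min_degree
    then obtain i j where ij: "i < m" "j < l" "v i j \<in> W" "i \<in> paths_within W"
      by (rule obtain_path_within_if_min_degree)
    have "i \<notin> paths_within (W - {v i j})" using ij by (auto simp: paths_within_def)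
    then have "paths_within (W - {v i j}) \<subset> paths_within W"
      using paths_within_mono[of "W - {v i j}" W] ij(4) by blast
    then have "card (paths_within (W - {v i j})) < card (paths_within W)"
      by (rule psubset_card_mono[OF finite_paths_within])
    then show ?thesis using remove[OF ij(3)] card_incident_path_vertex_le[OF ij(1,2), of W] by simp
  qed
qed

lemma hanging_paths_in_hered_Fg:
  assumes n: "n = nb + m * l" and g: "\<And>k. l \<le> k \<Longrightarrow> k \<le> n \<Longrightarrow> k div l \<le> g k"
  shows "G \<in> hered_Fg g n"
proof -
  have "cycle_rank W (induced_edges G W) \<le> int (g (card W))" if W: "W \<subseteq> {1..n}" for W
  proof (cases "paths_within W = {}")
    case True
    then show ?thesis using cycle_rank_le_paths_within[of W] finite_subset[OF W] by simp
  next
    case False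
    have W_fin: "finite W" using finite_subset[OF W] by simp
    have "card (paths_within W) \<le> card W div l"
      using card_paths_within_le[OF W_fin] length_ge_2 by (simp add: less_eq_div_iff_mult_less_eq)
    moreover have "0 < card (paths_within W)"
      using False finite_paths_within[of W] by (simp add: card_gt_0_iff)
    ultimately have "0 < card W div l" by linarith
    then have "l \<le> card W" by (simp add: div_greater_zero_iff)
    moreover have "card W \<le> n" using card_mono[OF _ W] by simp
    ultimately have "card (paths_within W) \<le> g (card W)"
      using g[of "card W"] \<open>card (paths_within W) \<le> card W div l\<close> by simp
    then show ?thesis using cycle_rank_le_paths_within[OF W_fin] by simp
  qed
  then show ?thesis using hanging_paths_subset n by (auto simp: hered_Fg_def graphs_on_def)
qed

end

locale hanging_path_code_pair =
  A: hanging_path_code nb l m p a b + B: hanging_path_code nb l m p' a' b'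
  for nb l m p a b p' a' b' +
  assumes same_graph: "hanging_paths nb l m p a b = hanging_paths nb l m p' a' b'"
    and same_starts: "\<And>i. i < m \<Longrightarrow> p (i * l) = p' (i * l)"
begin

lemma path_vertex_agree: "i < m \<Longrightarrow> j < l \<Longrightarrow> A.v i j = B.v i j"
proof (induction j rule: less_induct)
  case (less j)
  show ?case
  proof (cases j)
    case 0
    then show ?thesis using same_starts[OF less.prems(1)] by (simp add: path_vertex_def)
  next
    case (Suc k)
    have "{B.v i k, A.v i j} \<in> B.G"
      using A.inner_edge[of i k] less Suc same_graph by simp
    then have "A.v i j = B.prev_vertex i k \<or> A.v i j = B.next_vertex i k"
      using B.neighbour_of_path_vertex less.prems Suc by simp
    moreover have "A.v i j \<noteq> B.prev_vertex i k"
    proof (cases k)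
      case 0
      then have "B.prev_vertex i k = a' i" by (simp add: B.prev_vertex_def)
      then show ?thesis
        using B.a_in_base[OF less.prems(1)] A.path_vertex_not_in_base[of i j] by metis
    next
      case (Suc k')
      then have "B.prev_vertex i k = A.v i k'"
        using less.IH[of k'] less.prems \<open>j = Suc k\<close> by (simp add: B.prev_vertex_def)
      then show ?thesis
        using A.path_vertex_eq_iff[of i j i k'] less.prems \<open>j = Suc k\<close> Suc by simp
    qed
    moreover have "k \<noteq> l - 1" using less.prems Suc by simp
    then have "B.next_vertex i k = B.v i j" using Suc by (simp add: B.next_vertex_def)
    ultimately show ?thesis by simp
  qed
qed

lemma first_agree:
  assumes i: "i < m" shows "a i = a' i"
proof -
  have l: "0 < l" using A.length_ge_2 by simp
  have "{B.v i 0, a i} \<in> B.G"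
    using A.first_edge[OF i] path_vertex_agree[OF i l] same_graph by (simp add: insert_commute)
  then have "a i = B.prev_vertex i 0 \<or> a i = B.next_vertex i 0"
    by (rule B.neighbour_of_path_vertex[OF i l])
  moreover have "B.next_vertex i 0 \<notin> {1..nb}"
    using A.length_ge_2 B.path_vertex_not_in_base by (simp add: B.next_vertex_def)
  moreover have "a i \<in> {1..nb}" by (rule A.a_in_base[OF i])
  ultimately have "a i = B.prev_vertex i 0" by metis
  then show ?thesis by (simp add: B.prev_vertex_def)
qed

lemma last_agree:
  assumes i: "i < m" shows "b i = b' i"
proof -
  have l: "l - 1 < l" using A.length_ge_2 by simp
  have "{B.v i (l - 1), b i} \<in> B.G"
    using A.last_edge[OF i] path_vertex_agree[OF i l] same_graph by simp
  then have "b i = B.prev_vertex i (l - 1) \<or> b i = B.next_vertex i (l - 1)"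
    by (rule B.neighbour_of_path_vertex[OF i l])
  moreover have "B.prev_vertex i (l - 1) \<notin> {1..nb}"
    using A.length_ge_2 B.path_vertex_not_in_base by (simp add: B.prev_vertex_def)
  moreover have "b i \<in> {1..nb}" by (rule A.b_in_base[OF i])
  ultimately have "b i = B.next_vertex i (l - 1)" by metis
  then show ?thesis by (simp add: B.next_vertex_def)
qed

lemma permutation_agree: "p = p'"
proof
  fix k show "p k = p' k"
  proof (cases "k < m * l")
    case True
    then have "k \<in> (\<lambda>(i, j). i * l + j) ` ({..<m} \<times> {..<l})"
      using bij_betw_imp_surj_on[OF grid_index_bij[where m = m and l = l]] by simp
    then obtain i j where "i < m" "j < l" "k = i * l + j" by auto
    then show ?thesis using path_vertex_agree[of i j] by (simp add: path_vertex_def)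
  next
    case False
    then show ?thesis using permutes_not_in[OF A.permutes] permutes_not_in[OF B.permutes] by simp
  qed
qed

end

section \<open>Counting\<close>

lemma finite_hered_Fg: "finite (hered_Fg g n)"
proof (rule finite_subset)
  show "hered_Fg g n \<subseteq> Pow (edges_on {1..n})" by (auto simp: hered_Fg_def graphs_on_def)
  have "edges_on {1..n} \<subseteq> Pow {1..n}" by (auto simp: edges_on_def)
  then show "finite (Pow (edges_on {1..n}))" by (simp add: finite_subset)
qed

lemma hanging_path_codeI:
  assumes "2 \<le> l" "p permutes {..<m * l}" "a \<in> {..<m} \<rightarrow>\<^sub>E {1..nb}" "b \<in> {..<m} \<rightarrow>\<^sub>E {1..nb}"
  shows "hanging_path_code nb l m p a b"
proof
  show "a i \<in> {1..nb}" "b i \<in> {1..nb}" if "i < m" for i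
    using assms(3,4) that by (simp_all add: PiE_iff)
qed (fact assms)+

text \<open>The first vertex of every path is recorded to make the encoding injective; this costs the
  factor (ml)^m in the count.\<close>

lemma inj_on_hanging_paths_encoding:
  assumes "2 \<le> l"
  shows "inj_on (\<lambda>(p, a, b). (hanging_paths nb l m p a b, \<lambda>i\<in>{..<m}. p (i * l)))
    ({p. p permutes {..<m * l}} \<times> ({..<m} \<rightarrow>\<^sub>E {1..nb}) \<times> ({..<m} \<rightarrow>\<^sub>E {1..nb}))"
proof (rule inj_onI)
  fix x y
  assume "x \<in> {p. p permutes {..<m * l}} \<times> ({..<m} \<rightarrow>\<^sub>E {1..nb}) \<times> ({..<m} \<rightarrow>\<^sub>E {1..nb})"
    and "y \<in> {p. p permutes {..<m * l}} \<times> ({..<m} \<rightarrow>\<^sub>E {1..nb}) \<times> ({..<m} \<rightarrow>\<^sub>E {1..nb})"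
    and "(\<lambda>(p, a, b). (hanging_paths nb l m p a b, \<lambda>i\<in>{..<m}. p (i * l))) x
      = (\<lambda>(p, a, b). (hanging_paths nb l m p a b, \<lambda>i\<in>{..<m}. p (i * l))) y"
  moreover obtain p a b p' a' b' where xy: "x = (p, a, b)" "y = (p', a', b')" by (metis prod_cases3)
  ultimately have codes:
      "p permutes {..<m * l}" "a \<in> {..<m} \<rightarrow>\<^sub>E {1..nb}" "b \<in> {..<m} \<rightarrow>\<^sub>E {1..nb}"
      "p' permutes {..<m * l}" "a' \<in> {..<m} \<rightarrow>\<^sub>E {1..nb}" "b' \<in> {..<m} \<rightarrow>\<^sub>E {1..nb}"
    and graph: "hanging_paths nb l m p a b = hanging_paths nb l m p' a' b'"
    and starts: "(\<lambda>i\<in>{..<m}. p (i * l)) = (\<lambda>i\<in>{..<m}. p' (i * l))"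
    by simp_all
  have "p (i * l) = p' (i * l)" if "i < m" for i
    using fun_cong[OF starts, of i] that by simp
  with graph interpret hanging_path_code_pair nb l m p a b p' a' b'
    using hanging_path_codeI[OF assms codes(1-3)] hanging_path_codeI[OF assms codes(4-6)]
    by (simp add: hanging_path_code_pair_def hanging_path_code_pair_axioms_def)
  have "a = a'" by (rule PiE_ext[OF codes(2,5)]) (simp add: first_agree)
  moreover have "b = b'" by (rule PiE_ext[OF codes(3,6)]) (simp add: last_agree)
  ultimately show "x = y" using permutation_agree xy by simp
qed

lemma fact_mult_power_le_card_hered_Fg:
  assumes l: "2 \<le> l" and n: "n = nb + m * l"
    and g: "\<And>k. l \<le> k \<Longrightarrow> k \<le> n \<Longrightarrow> k div l \<le> g k"
  shows "fact (m * l) * nb ^ (2 * m) \<le> card (hered_Fg g n) * (m * l) ^ m"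
proof -
  define Ends where "Ends = {..<m} \<rightarrow>\<^sub>E {1..nb}"
  define Codes where "Codes = {p. p permutes {..<m * l}} \<times> Ends \<times> Ends"
  define Starts where "Starts = {..<m} \<rightarrow>\<^sub>E {..<m * l}"
  define encode where
    "encode = (\<lambda>(p, a, b). (hanging_paths nb l m p a b, \<lambda>i\<in>{..<m}. p (i * l)))"
  have "inj_on encode Codes"
    unfolding encode_def Codes_def Ends_def by (rule inj_on_hanging_paths_encoding[OF l])
  moreover have "encode ` Codes \<subseteq> hered_Fg g n \<times> Starts"
  proof (rule image_subsetI)
    fix x assume "x \<in> Codes"
    moreover obtain p a b where x: "x = (p, a, b)" by (metis prod_cases3)
    ultimately have "p permutes {..<m * l}" "a \<in> Ends" "b \<in> Ends" by (simp_all add: Codes_def)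
    then interpret hanging_path_code nb l m p a b
      unfolding Ends_def by (rule hanging_path_codeI[OF l])
    have "p (i * l) < m * l" if "i < m" for i
      using permutes_in_image[OF permutes] grid_index_less[OF that, of 0 l] l by simp
    then show "encode x \<in> hered_Fg g n \<times> Starts"
      using hanging_paths_in_hered_Fg[OF n g] by (simp add: x encode_def Starts_def)
  qed
  moreover have "finite (hered_Fg g n \<times> Starts)"
    by (simp add: Starts_def finite_hered_Fg finite_PiE)
  ultimately have "card Codes \<le> card (hered_Fg g n \<times> Starts)"
    by (rule card_inj_on_le)
  moreover have "card Codes = fact (m * l) * (nb ^ m * nb ^ m)"
    using card_permutations[of "{..<m * l}" "m * l"]
    by (simp add: Codes_def Ends_def card_cartesian_product card_PiE)
  moreover have "card (hered_Fg g n \<times> Starts) = card (hered_Fg g n) * (m * l) ^ m"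
    by (simp add: Starts_def card_cartesian_product card_PiE)
  ultimately show ?thesis by (simp add: mult_2 power_add)
qed

lemma fact_le_fact_mult_power:
  assumes "k \<le> n" shows "fact n \<le> (fact k :: nat) * n ^ (n - k)"
proof -
  have "fact n = (fact k :: nat) * (fact n div fact k)"
    using fact_dvd[OF assms] by (rule dvd_mult_div_cancel[symmetric])
  also have "\<dots> \<le> fact k * n ^ (n - k)"
    using fact_div_fact_le_pow[of "n - k" n] assms by (intro mult_le_mono2) simp
  finally show ?thesis .
qed

lemma exp_mult_fact_le_card_hered_Fg:
  fixes c :: real
  assumes "2 \<le> l" and n: "n = nb + m * l" and "\<And>k. l \<le> k \<Longrightarrow> k \<le> n \<Longrightarrow> k div l \<le> g k"
    and exp_bound: "exp c * real n ^ (nb + m) \<le> real nb ^ (2 * m)"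
  shows "exp c * fact n \<le> real (card (hered_Fg g n))"
proof -
  have "real (fact (m * l) * nb ^ (2 * m)) \<le> real (card (hered_Fg g n) * (m * l) ^ m)"
    using fact_mult_power_le_card_hered_Fg[OF assms(1-3)] by (simp only: of_nat_le_iff)
  then have count: "fact (m * l) * real nb ^ (2 * m) \<le> real (card (hered_Fg g n)) * real (m * l) ^ m"
    by simp
  have "real (fact n) \<le> real ((fact (m * l) :: nat) * n ^ nb)"
    using fact_le_fact_mult_power[of "m * l" n] n by (simp only: of_nat_le_iff) simp
  then have fact: "fact n \<le> fact (m * l) * real n ^ nb" by simp
  have "real (m * l) ^ m \<le> real n ^ m" using n by (intro power_mono) simp_all
  then have "exp c * fact n * real (m * l) ^ m \<le> exp c * (fact (m * l) * real n ^ nb) * real n ^ m"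
    using fact by (intro mult_mono) simp_all
  also have "\<dots> = fact (m * l) * (exp c * real n ^ (nb + m))" by (simp add: power_add)
  also have "\<dots> \<le> fact (m * l) * real nb ^ (2 * m)"
    using exp_bound by (intro mult_left_mono) simp_all
  also have "\<dots> \<le> real (card (hered_Fg g n)) * real (m * l) ^ m" by (rule count)
  finally have "exp c * fact n * real (m * l) ^ m \<le> real (card (hered_Fg g n)) * real (m * l) ^ m" .
  moreover have "0 < (m * l) ^ m" using assms(1) by (cases "m = 0") simp_all
  then have "0 < real (m * l) ^ m" by (metis of_nat_0_less_iff of_nat_power)
  ultimately show ?thesis by simp
qed

section \<open>Asymptotics\<close>

lemma eventually_ln_bound_of_smallo:
  fixes g :: "nat \<Rightarrow> nat" and M :: real
  assumes "(\<lambda>n. real n / ln (real n)) \<in> o(\<lambda>n. real (g n))" "0 < M"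
  shows "\<forall>\<^sub>F k in sequentially. M * real k / ln (real k) \<le> real (g k)"
proof -
  have "\<forall>\<^sub>F k in sequentially. real k / \<bar>ln (real k)\<bar> \<le> 1 / M * real (g k)"
    using landau_o.smallD[OF assms(1), of "1 / M"] assms(2) by simp
  moreover have "\<forall>\<^sub>F k in sequentially. 0 \<le> ln (real k)" by real_asymp
  ultimately show ?thesis
  proof eventually_elim
    case (elim k)
    then have "M * (real k / ln (real k)) \<le> M * (1 / M * real (g k))"
      using assms(2) by (intro mult_left_mono) simp_all
    then show ?case using assms(2) by simp
  qed
qed

lemma div_le_of_ln_bound:
  fixes M :: real and g :: "nat \<Rightarrow> nat"
  assumes g: "\<And>k. N \<le> k \<Longrightarrow> M * real k / ln (real k) \<le> real (g k)"
    and "N \<le> l" "2 \<le> l" "ln (real n) \<le> M * real l" "l \<le> k" "k \<le> n"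
  shows "k div l \<le> g k"
proof -
  have "0 < ln (real k)" using assms(3,5) by simp
  have "ln (real k) \<le> ln (real n)" using assms(3,5,6) by simp
  then have "ln (real k) \<le> M * real l" using assms(4) by linarith
  then have "real k * ln (real k) \<le> M * (real k * real l)"
    using mult_left_mono[of "ln (real k)" "M * real l" "real k"] by (simp add: ac_simps)
  then have "real k / real l \<le> M * real k / ln (real k)"
    using \<open>0 < ln (real k)\<close> assms(3) by (simp add: field_simps)
  also have "\<dots> \<le> real (g k)" using g assms(2,5) by simp
  finally have "real k / real l \<le> real (g k)" .
  moreover have "real (k div l) \<le> real k / real l" by (rule of_nat_div_le_of_nat)
  ultimately show ?thesis by linarith
qed

lemma filterlim_root_at_top_if_power_le:
  fixes f :: "nat \<Rightarrow> real"
  assumes "\<And>C. 1 \<le> C \<Longrightarrow> \<forall>\<^sub>F n in sequentially. C ^ n \<le> f n"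
  shows "filterlim (\<lambda>n. root n (f n)) at_top sequentially"
  unfolding filterlim_at_top
proof
  fix Z :: real
  have "\<forall>\<^sub>F n in sequentially. max Z 1 ^ n \<le> f n \<and> 0 < n"
    using assms[of "max Z 1"] eventually_gt_at_top[of 0] by (auto intro: eventually_conj)
  then show "\<forall>\<^sub>F n in sequentially. Z \<le> root n (f n)"
  proof (rule eventually_mono)
    fix n :: nat assume n: "max Z 1 ^ n \<le> f n \<and> 0 < n"
    then have "root n (max Z 1 ^ n) \<le> root n (f n)" by (simp add: real_root_le_mono)
    then show "Z \<le> root n (f n)" using n by (simp add: real_root_power_cancel)
  qed
qed

lemma exp_mult_power_le_power:
  fixes x y c :: real
  assumes "0 < x" "0 < y" "c + real k * ln x \<le> real j * ln y"
  shows "exp c * x ^ k \<le> y ^ j"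
proof -
  have "exp c * x ^ k = exp (c + real k * ln x)"
    using assms(1) by (simp add: exp_add exp_of_nat_mult)
  also have "\<dots> \<le> exp (real j * ln y)" using assms(3) by simp
  also have "\<dots> = y ^ j" using assms(2) by (simp add: exp_of_nat_mult)
  finally show ?thesis .
qed

lemma hanging_path_asymptotics:
  fixes M :: real and N :: nat
  assumes "1 \<le> M"
  shows "\<forall>\<^sub>F x in at_top. M * (real N + 1) \<le> ln x \<and> x / (ln x)\<^sup>2 + 1 \<le> x \<and> 4 * ln (ln x) \<le> ln x
    \<and> (M - 1) * x + (x / (ln x)\<^sup>2 + ln x / M + 4) * ln x
        \<le> ((x - x / (ln x)\<^sup>2 - 1) / (ln x / M + 3) - 1) * (ln x - 4 * ln (ln x))"
  using assms by (intro eventually_conj; real_asymp)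

lemma hanging_path_log_inequality:
  fixes x L M m nb :: real
  assumes "0 < L" "0 < x / L\<^sup>2" "x / L\<^sup>2 \<le> nb" "nb \<le> x / L\<^sup>2 + L / M + 4"
    and "(x - x / L\<^sup>2 - 1) / (L / M + 3) - 1 \<le> m" "0 \<le> m"
    and "L = ln x" "4 * ln L \<le> L"
    and key: "(M - 1) * x + (x / L\<^sup>2 + L / M + 4) * L
        \<le> ((x - x / L\<^sup>2 - 1) / (L / M + 3) - 1) * (L - 4 * ln L)"
  shows "(M - 1) * x + (nb + m) * L \<le> 2 * m * ln nb"
proof -
  have "ln (x / L\<^sup>2) = L - 2 * ln L" using assms(1,2,7) by (simp add: ln_div ln_realpow)
  moreover have "ln (x / L\<^sup>2) \<le> ln nb" using assms(2,3) by simp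
  ultimately have "m * (L - 2 * ln L) \<le> m * ln nb" using assms(6) by (intro mult_left_mono) simp_all
  moreover have "((x - x / L\<^sup>2 - 1) / (L / M + 3) - 1) * (L - 4 * ln L) \<le> m * (L - 4 * ln L)"
    using assms(5,8) by (intro mult_right_mono) simp_all
  moreover have "nb * L \<le> (x / L\<^sup>2 + L / M + 4) * L"
    using assms(1,4) by (intro mult_right_mono) simp_all
  ultimately show ?thesis using key by (simp add: algebra_simps)
qed

lemma hanging_path_parameters:
  fixes M :: real and N n :: nat
  defines "L \<equiv> ln (real n)"
  assumes M: "1 \<le> M"
    and L_large: "M * (real N + 1) \<le> L"
    and base_fits: "real n / L\<^sup>2 + 1 \<le> real n"
    and "4 * ln L \<le> L"
    and "(M - 1) * real n + (real n / L\<^sup>2 + L / M + 4) * L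
        \<le> ((real n - real n / L\<^sup>2 - 1) / (L / M + 3) - 1) * (L - 4 * ln L)"
  shows "\<exists>l m nb. n = nb + m * l \<and> 2 \<le> l \<and> N \<le> l \<and> ln (real n) \<le> M * real l
    \<and> exp ((M - 1) * real n) * real n ^ (nb + m) \<le> real nb ^ (2 * m)"
proof -
  txt \<open>Paths of length about L / M; the base takes the b to b + l - 1 vertices left over, where b
    is about n / L^2.\<close>
  define x where "x = real n"
  define l where "l = nat \<lceil>L / M\<rceil> + 2"
  define b where "b = nat \<lceil>x / L\<^sup>2\<rceil>"
  define m where "m = (n - b) div l"
  define nb where "nb = n - m * l"
  have L_N: "real N + 1 \<le> L / M" using L_large M by (simp add: field_simps)
  then have "0 < L / M" by (simp add: add_nonneg_pos)
  then have L0: "0 < L" using M by (simp add: zero_less_divide_iff)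
  then have x0: "0 < x" by (cases n) (simp_all add: L_def x_def)
  have "real l = of_int \<lceil>L / M\<rceil> + 2" using L0 M by (simp add: l_def)
  then have l_lower: "L / M + 2 \<le> real l" and l_upper: "real l \<le> L / M + 3"
    using ceiling_correct[of "L / M"] by linarith+
  have "real b = of_int \<lceil>x / L\<^sup>2\<rceil>" using x0 by (simp add: b_def)
  then have b_lower: "x / L\<^sup>2 \<le> real b" and b_upper: "real b \<le> x / L\<^sup>2 + 1"
    using ceiling_correct[of "x / L\<^sup>2"] by linarith+
  have "b \<le> n" using b_upper base_fits by (simp add: x_def)
  have "0 < l" by (simp add: l_def)
  then have "(n - b) mod l < l" by simp
  then have "m * l \<le> n - b" "n - b < m * l + l"
    using div_mult_mod_eq[of "n - b" l] unfolding m_def by linarith+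
  then have n_split: "n = nb + m * l" and "b \<le> nb" and "nb < b + l"
    using \<open>b \<le> n\<close> by (simp_all add: nb_def)
  have "L / M \<le> real l" using l_lower by linarith
  then have ln_bound: "ln (real n) \<le> M * real l"
    using M by (simp add: L_def divide_le_eq mult.commute)
  have "N \<le> l" using L_N l_lower by linarith
  have "x - real b < (real m + 1) * real l"
    using \<open>n - b < m * l + l\<close> \<open>b \<le> n\<close>
    by (simp add: x_def algebra_simps of_nat_diff flip: of_nat_mult of_nat_add)
  also have "\<dots> \<le> (real m + 1) * (L / M + 3)" using l_upper by (intro mult_left_mono) simp_all
  finally have "(x - x / L\<^sup>2 - 1) / (L / M + 3) < real m + 1"
    using b_upper \<open>0 < L / M\<close> by (simp add: pos_divide_less_eq)
  moreover have "0 < x / L\<^sup>2" using x0 L0 by simp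
  moreover have "real nb \<le> x / L\<^sup>2 + L / M + 4" using \<open>nb < b + l\<close> b_upper l_upper by linarith
  ultimately have "(M - 1) * x + (real nb + real m) * L \<le> 2 * real m * ln (real nb)"
    using b_lower \<open>b \<le> nb\<close> L0 assms(5,6)
    by (intro hanging_path_log_inequality) (simp_all add: L_def x_def)
  then have "exp ((M - 1) * x) * x ^ (nb + m) \<le> real nb ^ (2 * m)"
    using x0 b_lower \<open>b \<le> nb\<close> \<open>0 < x / L\<^sup>2\<close>
    by (intro exp_mult_power_le_power) (simp_all add: L_def x_def)
  moreover have "2 \<le> l" by (simp add: l_def)
  ultimately show ?thesis using n_split \<open>N \<le> l\<close> ln_bound by (auto simp: x_def)
qed

lemma eventually_hanging_path_parameters:
  fixes M :: real and N :: nat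
  assumes "1 \<le> M"
  shows "\<forall>\<^sub>F n in sequentially. \<exists>l m nb. n = nb + m * l \<and> 2 \<le> l \<and> N \<le> l
    \<and> ln (real n) \<le> M * real l \<and> exp ((M - 1) * real n) * real n ^ (nb + m) \<le> real nb ^ (2 * m)"
  using eventually_compose_filterlim[OF hanging_path_asymptotics[OF assms, of N]
      filterlim_real_sequentially]
  by (rule eventually_mono) (use hanging_path_parameters[OF assms] in blast)

lemma eventually_power_mult_fact_le_card_hered_Fg:
  fixes g :: "nat \<Rightarrow> nat" and C :: real
  assumes g: "(\<lambda>n. real n / ln (real n)) \<in> o(\<lambda>n. real (g n))" and C: "1 \<le> C"
  shows "\<forall>\<^sub>F n in sequentially. C ^ n * fact n \<le> real (card (hered_Fg g n))"
proof -
  define M where "M = ln C + 1"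
  have M: "1 \<le> M" using C by (simp add: M_def)
  obtain N where g_bound: "\<And>k. N \<le> k \<Longrightarrow> M * real k / ln (real k) \<le> real (g k)"
    using eventually_ln_bound_of_smallo[OF g, of M] M by (auto simp: eventually_sequentially)
  from eventually_hanging_path_parameters[OF M, of N] show ?thesis
  proof (rule eventually_mono)
    fix n
    assume "\<exists>l m nb. n = nb + m * l \<and> 2 \<le> l \<and> N \<le> l \<and> ln (real n) \<le> M * real l
      \<and> exp ((M - 1) * real n) * real n ^ (nb + m) \<le> real nb ^ (2 * m)"
    then obtain l m nb where "n = nb + m * l" "2 \<le> l" "N \<le> l" "ln (real n) \<le> M * real l"
      and "exp ((M - 1) * real n) * real n ^ (nb + m) \<le> real nb ^ (2 * m)"
      by blast
    moreover have "k div l \<le> g k" if "l \<le> k" "k \<le> n" for k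
      using div_le_of_ln_bound[OF g_bound \<open>N \<le> l\<close> \<open>2 \<le> l\<close> \<open>ln (real n) \<le> M * real l\<close> that] .
    ultimately have "exp ((M - 1) * real n) * fact n \<le> real (card (hered_Fg g n))"
      by (intro exp_mult_fact_le_card_hered_Fg)
    moreover have "exp ((M - 1) * real n) = C ^ n"
      using C by (simp add: M_def exp_of_nat_mult mult.commute)
    ultimately show "C ^ n * fact n \<le> real (card (hered_Fg g n))" by simp
  qed
qed

theorem theorem5:
  fixes g :: "nat \<Rightarrow> nat"
  assumes "(\<lambda>n. real n / ln (real n)) \<in> o(\<lambda>n. real (g n))"
  shows "filterlim (\<lambda>n. root n (real (card (hered_Fg g n)) / fact n)) at_top sequentially"
proof (rule filterlim_root_at_top_if_power_le)
  fix C :: real assume "1 \<le> C"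
  show "\<forall>\<^sub>F n in sequentially. C ^ n \<le> real (card (hered_Fg g n)) / fact n"
    using eventually_power_mult_fact_le_card_hered_Fg[OF assms \<open>1 \<le> C\<close>]
    by eventually_elim (simp add: le_divide_eq)
qed

end
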